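(* Let $A=(a_{ij})_{i,j=1}^n$ be the weighted adjacency matrix of a (possibly directed) graph on vertices $v_1,\dots,v_n$, with nonnegative entries, such that every out-degree $o(v_i)=\sum_{j=1}^n a_{ij}$ is positive. Let $D_o=\operatorname{diag}(o(v_1),\dots,o(v_n))$ and $P=D_o^{-1}A$. Define $\nu(v_j)=\sum_{\ell=1}^n p_{\ell j}$, assume $\nu(v_j)>0$ for all $j$, and let $D_\nu=\operatorname{diag}(\nu(v_1),\dots,\nu(v_n))$. Then the matrix $Q=P D_\nu^{-1} P^\top$ is doubly stochastic.
   Context: $P$ is the row-stochastic transition matrix of the random walk on the graph ($p_{ij}$ is the probability of moving from $v_i$ to $v_j$ in one step). The condition $\nu(v_j)>0$ means every vertex has at least one incoming edge (e.g., ensured by adding self-loops), so that $D_\nu$ is invertible. A doubly stochastic matrix is a nonnegative matrix whose rows and columns each sum to $1$. *)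

theory Defs
  imports "HOL-Analysis.Analysis"
begin

definition diag_mat :: "('n::finite \<Rightarrow> real) \<Rightarrow> real^'n^'n" where
  "diag_mat d = (\<chi> i j. if i = j then d i else 0)"

definition out_deg :: "real^'n^'n \<Rightarrow> 'n::finite \<Rightarrow> real" where
  "out_deg A i = (\<Sum>j\<in>UNIV. A $ i $ j)"

definition doubly_stochastic :: "real^'n^'n \<Rightarrow> bool" where
  "doubly_stochastic M \<longleftrightarrow>
     (\<forall>i j. 0 \<le> M $ i $ j) \<and>
     (\<forall>i. (\<Sum>j\<in>UNIV. M $ i $ j) = 1) \<and>
     (\<forall>j. (\<Sum>i\<in>UNIV. M $ i $ j) = 1)"

end

theory Submission
  imports Defs
begin

text \<open>
  The walk matrix P is row stochastic, and Q has entries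
  q(i,k) = \<Sum>j. p(i,j) p(k,j) / \<nu>(j), so Q is nonnegative and symmetric.
  Its i-th row sum is \<Sum>j. p(i,j) (\<Sum>k. p(k,j)) / \<nu>(j) = \<Sum>j. p(i,j) = 1, because
  \<nu> is exactly the vector of column sums of P; by symmetry the column sums are 1 as well.
\<close>

lemma matrix_inv_eqI:
  fixes D :: "'a::semiring_1^'n^'m" and B :: "'a^'m^'n"
  assumes "D ** B = mat 1" "B ** D = mat 1"
  shows "matrix_inv D = B"
proof -
  let ?C = "matrix_inv D"
  have "D ** ?C = mat 1 \<and> ?C ** D = mat 1"
    unfolding matrix_inv_def by (rule someI[of _ B]) (use assms in auto)
  then have left_inv: "?C ** D = mat 1" by auto
  have "?C = ?C ** (D ** B)" using assms by simp
  also have "\<dots> = (?C ** D) ** B" by (simp add: matrix_mul_assoc)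
  also have "\<dots> = B" using left_inv by simp
  finally show ?thesis .
qed

lemma diag_mat_mult_nth: "(diag_mat d ** M) $ i $ j = d i * M $ i $ j"
  by (simp add: diag_mat_def matrix_matrix_mult_def if_distrib[of "\<lambda>x. x * y" for y]
      cong: if_cong)

lemma mult_diag_mat_nth: "(M ** diag_mat d) $ i $ j = M $ i $ j * d j"
  by (simp add: diag_mat_def matrix_matrix_mult_def if_distrib[of "\<lambda>x. y * x" for y]
      cong: if_cong)

lemma matrix_inv_diag_mat:
  assumes "\<forall>i. d i \<noteq> 0"
  shows "matrix_inv (diag_mat d) = diag_mat (\<lambda>i. 1 / d i)"
  by (rule matrix_inv_eqI)
    (use assms in \<open>simp_all add: diag_mat_mult_nth vec_eq_iff mat_def, simp_all add: diag_mat_def\<close>)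

lemma row_normalized_nth:
  assumes "\<forall>i. out_deg A i \<noteq> 0"
  shows "(matrix_inv (diag_mat (out_deg A)) ** A) $ i $ j = A $ i $ j / out_deg A i"
  using assms by (simp add: matrix_inv_diag_mat diag_mat_mult_nth)

lemma row_normalized_row_sum:
  assumes "\<forall>i. out_deg A i \<noteq> 0"
  shows "(\<Sum>j\<in>UNIV. (matrix_inv (diag_mat (out_deg A)) ** A) $ i $ j) = 1"
  using assms by (simp add: row_normalized_nth flip: sum_divide_distrib out_deg_def)

lemma doubly_stochastic_if_symmetric:
  assumes "\<forall>i j. 0 \<le> M $ i $ j"
    and "\<forall>i. (\<Sum>j\<in>UNIV. M $ i $ j) = 1"
    and "transpose M = M"
  shows "doubly_stochastic M"
proof -
  have "M $ i $ j = M $ j $ i" for i j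
    using arg_cong[OF assms(3), of "\<lambda>M. M $ j $ i"] by (simp add: transpose_def)
  then show ?thesis
    using assms(1,2) unfolding doubly_stochastic_def by simp
qed

lemma mult_diag_mult_transpose_nth:
  assumes "\<forall>j. nu j \<noteq> 0"
  shows "(P ** matrix_inv (diag_mat nu) ** transpose P) $ i $ k
           = (\<Sum>j\<in>UNIV. P $ i $ j * P $ k $ j / nu j)"
  using assms
  by (simp add: matrix_inv_diag_mat matrix_matrix_mult_def[of "_ ** _"] mult_diag_mat_nth
      transpose_def)

lemma doubly_stochastic_mult_diag_mult_transpose:
  assumes nonneg: "\<forall>i j. 0 \<le> P $ i $ j"
    and row_sum: "\<forall>i. (\<Sum>j\<in>UNIV. P $ i $ j) = 1"
    and nu_def: "\<forall>j. nu j = (\<Sum>l\<in>UNIV. P $ l $ j)"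
    and nu_pos: "\<forall>j. nu j > 0"
  shows "doubly_stochastic (P ** matrix_inv (diag_mat nu) ** transpose P)"
proof (rule doubly_stochastic_if_symmetric)
  let ?Q = "P ** matrix_inv (diag_mat nu) ** transpose P"
  have Q_nth: "?Q $ i $ k = (\<Sum>j\<in>UNIV. P $ i $ j * P $ k $ j / nu j)" for i k
    using nu_pos by (intro mult_diag_mult_transpose_nth) (simp add: less_imp_neq[symmetric])
  show "\<forall>i k. 0 \<le> ?Q $ i $ k"
    using nonneg nu_pos by (simp add: Q_nth less_imp_le sum_nonneg)
  show "transpose ?Q = ?Q"
  proof -
    have "?Q $ k $ i = ?Q $ i $ k" for i k
      by (simp add: Q_nth mult.commute)
    then show ?thesis
      by (simp add: vec_eq_iff transpose_def)
  qed
  show "\<forall>i. (\<Sum>k\<in>UNIV. ?Q $ i $ k) = 1"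
  proof
    fix i
    have "(\<Sum>k\<in>UNIV. ?Q $ i $ k) = (\<Sum>j\<in>UNIV. \<Sum>k\<in>UNIV. P $ i $ j * P $ k $ j / nu j)"
      unfolding Q_nth by (rule sum.swap)
    also have "\<dots> = (\<Sum>j\<in>UNIV. P $ i $ j / nu j * (\<Sum>k\<in>UNIV. P $ k $ j))"
      by (simp add: sum_distrib_left)
    also have "\<dots> = (\<Sum>j\<in>UNIV. P $ i $ j)"
      using nu_def nu_pos by (intro sum.cong) (auto simp: less_imp_neq[symmetric])
    finally show "(\<Sum>k\<in>UNIV. ?Q $ i $ k) = 1"
      using row_sum by simp
  qed
qed

theorem mainTheorem1:
  fixes A :: "real^'n^'n"
  assumes nonneg: "\<forall>i j. 0 \<le> A $ i $ j"
    and out_pos: "\<forall>i. out_deg A i > 0"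
    and P_def: "P = matrix_inv (diag_mat (out_deg A)) ** A"
    and nu_def: "\<forall>j. nu j = (\<Sum>l\<in>UNIV. P $ l $ j)"
    and nu_pos: "\<forall>j. nu j > 0"
  shows "doubly_stochastic (P ** matrix_inv (diag_mat nu) ** transpose P)"
proof (rule doubly_stochastic_mult_diag_mult_transpose[OF _ _ nu_def nu_pos])
  have out_nonzero: "\<forall>i. out_deg A i \<noteq> 0"
    using out_pos by (simp add: less_imp_neq[symmetric])
  show "\<forall>i j. 0 \<le> P $ i $ j"
    using nonneg out_pos by (simp add: P_def row_normalized_nth[OF out_nonzero] less_imp_le)
  show "\<forall>i. (\<Sum>j\<in>UNIV. P $ i $ j) = 1"
    unfolding P_def using row_normalized_row_sum[OF out_nonzero] by simp
qed

end
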